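(* Let $w$ be an instance of Metric-MAXCUT on a finite set $V$, let $\gamma\ge1$ and let $(L,R)$ be a $\gamma$-locally stable cut. Then for every $x\in L$ and $z\in R$, $$w(x,z)\ge\left(\frac{\gamma^2-1}{\gamma}\right)\cdot\frac{w(x,R)}{\gamma|R|+|L|}.$$
   Context: An instance of Metric-MAXCUT is a finite set $V$ with a metric $w$. For $x\in V$ and $B\subseteq V$, $w(x,B)=\sum_{b\in B}w(x,b)$. A cut $(L,R)$ (partition of $V$, not necessarily maximal) is $\gamma$-locally stable if for every vertex $x$ the total weight of edges from $x$ to the opposite side is at least $\gamma$ times the total weight of edges from $x$ to its own side, i.e. $w(x,R)\ge\gamma w(x,L)$ for $x\in L$ and $w(z,L)\ge\gamma w(z,R)$ for $z\in R$. *)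

theory Defs
  imports Main "HOL.Real"
begin

definition metric_on :: "'a set \<Rightarrow> ('a \<Rightarrow> 'a \<Rightarrow> real) \<Rightarrow> bool" where
  "metric_on V w \<longleftrightarrow>
     (\<forall>x\<in>V. \<forall>y\<in>V. w x y \<ge> 0) \<and>
     (\<forall>x\<in>V. \<forall>y\<in>V. w x y = 0 \<longleftrightarrow> x = y) \<and>
     (\<forall>x\<in>V. \<forall>y\<in>V. w x y = w y x) \<and>
     (\<forall>x\<in>V. \<forall>y\<in>V. \<forall>z\<in>V. w x z \<le> w x y + w y z)"

definition wset :: "('a \<Rightarrow> 'a \<Rightarrow> real) \<Rightarrow> 'a \<Rightarrow> 'a set \<Rightarrow> real" where
  "wset w x B = (\<Sum>b\<in>B. w x b)"

definition is_cut :: "'a set \<Rightarrow> 'a set \<Rightarrow> 'a set \<Rightarrow> bool" where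
  "is_cut V L R \<longleftrightarrow> L \<union> R = V \<and> L \<inter> R = {}"

definition locally_stable ::
  "real \<Rightarrow> ('a \<Rightarrow> 'a \<Rightarrow> real) \<Rightarrow> 'a set \<Rightarrow> 'a set \<Rightarrow> bool" where
  "locally_stable \<gamma> w L R \<longleftrightarrow>
     (\<forall>x\<in>L. wset w x R \<ge> \<gamma> * wset w x L) \<and>
     (\<forall>z\<in>R. wset w z L \<ge> \<gamma> * wset w z R)"

end

theory Submission
  imports Defs
begin

text \<open>Write \<open>a = w(x,z)\<close>. Summing the triangle inequality through \<open>z\<close> over \<open>R\<close> gives
  \<open>w(x,R) \<le> |R| a + w(z,R)\<close>, and through \<open>x\<close> over \<open>L\<close> gives \<open>w(z,L) \<le> |L| a + w(x,L)\<close>.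
  Stability of \<open>z\<close> and of \<open>x\<close> chains these into
  \<open>\<gamma>\<^sup>2 w(x,R) \<le> \<gamma>\<^sup>2 |R| a + \<gamma> w(z,L) \<le> \<gamma>(\<gamma>|R| + |L|) a + w(x,R)\<close>,
  and dividing by \<open>\<gamma>(\<gamma>|R| + |L|)\<close> gives the bound.\<close>

lemma wset_le_triangle:
  assumes "metric_on V w" and "B \<subseteq> V" and "x \<in> V" and "z \<in> V"
  shows "wset w x B \<le> real (card B) * w x z + wset w z B"
proof -
  have "w x y \<le> w x z + w z y" if "y \<in> B" for y
    using assms that unfolding metric_on_def by blast
  then have "wset w x B \<le> (\<Sum>y\<in>B. w x z + w z y)"
    unfolding wset_def by (rule sum_mono)
  also have "\<dots> = real (card B) * w x z + wset w z B"
    by (simp add: sum.distrib wset_def)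
  finally show ?thesis .
qed

lemma locally_stable_edge_lower_bound:
  assumes "metric_on V w" and "is_cut V L R" and "locally_stable \<gamma> w L R"
    and "\<gamma> \<ge> 0" and "x \<in> L" and "z \<in> R"
  shows "(\<gamma>^2 - 1) * wset w x R \<le> \<gamma> * (\<gamma> * real (card R) + real (card L)) * w x z"
proof -
  have L: "L \<subseteq> V" and R: "R \<subseteq> V" and x: "x \<in> V" and z: "z \<in> V"
    using assms(2,5,6) unfolding is_cut_def by auto
  have "w z x = w x z"
    using assms(1) x z unfolding metric_on_def by blast
  then have through_x: "wset w z L \<le> real (card L) * w x z + wset w x L"
    using wset_le_triangle[OF assms(1) L z x] by simp
  have through_z: "wset w x R \<le> real (card R) * w x z + wset w z R"
    using wset_le_triangle[OF assms(1) R x z] .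
  have stable_x: "\<gamma> * wset w x L \<le> wset w x R"
    and stable_z: "\<gamma> * wset w z R \<le> wset w z L"
    using assms(3,5,6) unfolding locally_stable_def by auto
  have "\<gamma>^2 * wset w x R \<le> \<gamma>^2 * real (card R) * w x z + \<gamma> * (\<gamma> * wset w z R)"
    using mult_left_mono[OF through_z, of "\<gamma>^2"] by (simp add: power2_eq_square algebra_simps)
  also have "\<dots> \<le> \<gamma>^2 * real (card R) * w x z + \<gamma> * (real (card L) * w x z + wset w x L)"
    using stable_z through_x assms(4) by (simp add: mult_left_mono)
  also have "\<dots> \<le> \<gamma> * (\<gamma> * real (card R) + real (card L)) * w x z + wset w x R"
    using stable_x by (simp add: power2_eq_square algebra_simps)
  finally show ?thesis
    by (simp add: algebra_simps)
qed

theorem proposition3: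
  fixes V L R :: "'a set" and w :: "'a \<Rightarrow> 'a \<Rightarrow> real" and \<gamma> :: real
  assumes "finite V"
    and "metric_on V w"
    and "\<gamma> \<ge> 1"
    and "is_cut V L R"
    and "locally_stable \<gamma> w L R"
    and "x \<in> L" and "z \<in> R"
  shows "w x z \<ge> ((\<gamma>^2 - 1) / \<gamma>) * (wset w x R / (\<gamma> * real (card R) + real (card L)))"
proof -
  have key: "(\<gamma>^2 - 1) * wset w x R \<le> \<gamma> * (\<gamma> * real (card R) + real (card L)) * w x z"
    using locally_stable_edge_lower_bound[OF assms(2,4,5) _ assms(6,7)] assms(3) by simp
  have "finite R"
    using assms(1,4) finite_subset unfolding is_cut_def by blast
  then have "card R > 0"
    using assms(7) card_gt_0_iff by blast
  then have "\<gamma> * (\<gamma> * real (card R) + real (card L)) > 0"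
    using assms(3) by (simp add: add_pos_nonneg)
  then show ?thesis
    using key by (simp add: divide_le_eq mult_ac)
qed

end
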